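(* Let $G$ be a connected bipartite graph with color classes $E$ and $V$, let $d=|E|+|V|-2$, and let $\varepsilon_G(s)=|(s\cdot Q_G)\cap(\mathbf Z^E\oplus\mathbf Z^V)|$ be the Ehrhart polynomial of its root polytope, written (uniquely) as $\varepsilon_G(s)=\sum_{k=0}^{d}a_k\binom{s+d-k}{d}$ with rational $a_k$. Then the $h$-vector $h$ of any triangulation of $Q_G$ satisfies \[x^{|E|+|V|-1}h(x^{-1})=a_0+a_1x+\cdots+a_dx^d.\] In particular, all triangulations of $Q_G$ have the same $h$-vector.
   Context: Bipartite graphs have no multiple edges; every edge joins $E$ to $V$. The root polytope $Q_G\subset\mathbf R^E\oplus\mathbf R^V$ is the convex hull of $\mathbf i_{\{e\}}+\mathbf i_{\{v\}}$ over edges $ev$ of $G$ ($\mathbf i$ = indicator vector); it has dimension $d=|E|+|V|-2$ when $G$ is connected. $\binom{s+d-k}{d}$ is regarded as a polynomial in $s$. A triangulation of $Q_G$ is a collection of $d$-dimensional simplices spanned by vertices of $Q_G$, pairwise intersecting in common faces, with union $Q_G$, viewed as the simplicial complex of all their faces. Its $f$-vector is $f(y)=y^{d+1}+f_0y^d+\cdots+f_{d-1}y+f_d$ with $f_k$ the number of $k$-dimensional simplices, and its $h$-vector is $h(x)=f(x-1)$. *)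

theory Defs
  imports "HOL-Analysis.Analysis"
begin

text \<open>A bipartite graph with colour classes the (finite) types 'e and 'v is given by
  its edge relation G :: 'e => 'v => bool. Vertices of the graph are elements of 'e + 'v.\<close>

definition bip_adj :: "('e \<Rightarrow> 'v \<Rightarrow> bool) \<Rightarrow> (('e + 'v) \<times> ('e + 'v)) set" where
  "bip_adj G = {(Inl e, Inr v) | e v. G e v} \<union> {(Inr v, Inl e) | e v. G e v}"

definition bip_connected :: "('e \<Rightarrow> 'v \<Rightarrow> bool) \<Rightarrow> bool" where
  "bip_connected G \<longleftrightarrow> (\<forall>x y. (x, y) \<in> (bip_adj G)\<^sup>*)"

definition root_polytope :: "('e::finite \<Rightarrow> 'v::finite \<Rightarrow> bool) \<Rightarrow> (real ^ ('e + 'v)) set" where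
  "root_polytope G = convex hull {axis (Inl e) 1 + axis (Inr v) 1 | e v. G e v}"

definition ehrhart :: "('e::finite \<Rightarrow> 'v::finite \<Rightarrow> bool) \<Rightarrow> nat \<Rightarrow> nat" where
  "ehrhart G s = card {x \<in> (\<lambda>p. real s *\<^sub>R p) ` root_polytope G. \<forall>i. x $ i \<in> \<int>}"

definition is_triangulation :: "nat \<Rightarrow> ('a::euclidean_space) set \<Rightarrow> 'a set set \<Rightarrow> bool" where
  "is_triangulation d P T \<longleftrightarrow>
     (\<forall>S\<in>T. S \<subseteq> {x. x extreme_point_of P} \<and> \<not> affine_dependent S \<and> card S = d + 1) \<and>
     (\<forall>S\<in>T. \<forall>S'\<in>T. (convex hull S \<inter> convex hull S') face_of (convex hull S) \<and>
                     (convex hull S \<inter> convex hull S') face_of (convex hull S')) \<and>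
     \<Union> ((\<lambda>S. convex hull S) ` T) = P"

text \<open>Number of faces of the simplicial complex with j vertices (i.e. of dimension j-1);
  j = 0 gives the empty face.\<close>

definition face_count :: "'a set set \<Rightarrow> nat \<Rightarrow> nat" where
  "face_count T j = card {F. \<exists>S\<in>T. F \<subseteq> S \<and> card F = j}"

definition f_poly :: "nat \<Rightarrow> 'a set set \<Rightarrow> real \<Rightarrow> real" where
  "f_poly d T y = (\<Sum>j\<le>d+1. real (face_count T j) * y ^ (d + 1 - j))"

definition h_poly :: "nat \<Rightarrow> 'a set set \<Rightarrow> real \<Rightarrow> real" where
  "h_poly d T x = f_poly d T (x - 1)"

end

theory Submission
  imports Defs "HOL-Computational_Algebra.Polynomial_FPS"
begin

text \<open>
  A linearly independent set of edge vectors i_e + i_v of a bipartite graph is a forest, so it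
  has a leaf; peeling off leaves shows that every lattice point in its linear span is an integer
  combination of it, i.e. every simplex spanned by edge vectors is unimodular. Hence every lattice
  point of s Q_G is, for exactly one face F of the triangulation, a combination of the vertices
  of F with positive integer coefficients summing to s, and there are [X^s] (X/(1-X))^|F| of
  these. So the Ehrhart series is sum_j f_(j-1) (X/(1-X))^j, while the binomial expansion writes
  it as (sum_k a_k X^k) / (1-X)^(d+1). Multiplying by (1-X)^(d+1) gives
  sum_k a_k x^k = sum_j f_(j-1) x^j (1-x)^(d+1-j) = x^(d+1) h(1/x).
\<close>

section \<open>Affine combinations over simplices\<close>

lemma affine_independent_coefficients_eq:
  fixes S :: "'a::real_vector set"
  assumes indep: "\<not> affine_dependent S" and "finite S" and FS: "F \<subseteq> S" and F'S: "F' \<subseteq> S"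
    and sums: "sum c F = sum c' F'"
    and comb: "(\<Sum>w\<in>F. c w *\<^sub>R w) = (\<Sum>w\<in>F'. c' w *\<^sub>R w)"
    and "v \<in> S"
  shows "(if v \<in> F then c v else 0) = (if v \<in> F' then c' v else 0)"
proof -
  have extend: "(\<Sum>w\<in>S. if w \<in> A then b w else 0) = sum b A"
    "(\<Sum>w\<in>S. (if w \<in> A then b w else 0) *\<^sub>R w) = (\<Sum>w\<in>A. b w *\<^sub>R w)"
    if "A \<subseteq> S" for A and b :: "'a \<Rightarrow> real"
    using that \<open>finite S\<close> by (auto simp: if_distrib[of "\<lambda>t. t *\<^sub>R _"] sum.If_cases Int_absorb1)
  define U where "U w = (if w \<in> F then c w else 0) - (if w \<in> F' then c' w else 0)" for w
  have "sum U S = 0" "(\<Sum>w\<in>S. U w *\<^sub>R w) = 0"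
    using sums comb by (simp_all add: U_def sum_subtractf scaleR_diff_left extend FS F'S)
  then show ?thesis
    using indep \<open>v \<in> S\<close> unfolding affine_dependent_explicit_finite[OF \<open>finite S\<close>] U_def by force
qed

lemma positive_affine_combination_unique:
  fixes S :: "'a::real_vector set"
  assumes "\<not> affine_dependent S" "finite S" "F \<subseteq> S" "F' \<subseteq> S"
    and pos: "\<forall>v\<in>F. 0 < c v" and pos': "\<forall>v\<in>F'. 0 < c' v" and "sum c F = sum c' F'"
    and "(\<Sum>v\<in>F. c v *\<^sub>R v) = (\<Sum>v\<in>F'. c' v *\<^sub>R v)"
  shows "F = F' \<and> (\<forall>v\<in>F. c v = c' v)"
proof -
  have eq: "(if v \<in> F then c v else 0) = (if v \<in> F' then c' v else 0)" if "v \<in> S" for v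
    using affine_independent_coefficients_eq[OF assms(1-4,7,8) that] .
  have "F = F'"
    using eq pos pos' \<open>F \<subseteq> S\<close> \<open>F' \<subseteq> S\<close> by (metis less_irrefl subsetD subsetI subset_antisym)
  then show ?thesis
    using eq \<open>F' \<subseteq> S\<close> by (metis subsetD)
qed

lemma convex_hull_finite_positive:
  fixes S :: "'a::real_vector set"
  assumes "finite S" "y \<in> convex hull S"
  obtains F c where "F \<subseteq> S" "\<forall>v\<in>F. 0 < c v" "sum c F = 1" "(\<Sum>v\<in>F. c v *\<^sub>R v) = y"
proof -
  obtain c where c: "\<forall>v\<in>S. 0 \<le> c v" "sum c S = 1" "(\<Sum>v\<in>S. c v *\<^sub>R v) = y"
    using assms unfolding convex_hull_finite[OF \<open>finite S\<close>] by blast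
  define F where "F = {v \<in> S. c v \<noteq> 0}"
  have "sum c F = 1" "(\<Sum>v\<in>F. c v *\<^sub>R v) = y"
    using c \<open>finite S\<close> unfolding F_def by (auto intro: trans[OF sum.mono_neutral_left])
  moreover have "F \<subseteq> S" "\<forall>v\<in>F. 0 < c v"
    using c(1) unfolding F_def by force+
  ultimately show thesis
    using that by blast
qed

lemma simplicial_positive_combination_unique:
  fixes S S' :: "'a::euclidean_space set"
  assumes indep: "\<not> affine_dependent S" and indep': "\<not> affine_dependent S'"
    and face: "(convex hull S \<inter> convex hull S') face_of convex hull S"
    and face': "(convex hull S \<inter> convex hull S') face_of convex hull S'"
    and FS: "F \<subseteq> S" and F'S': "F' \<subseteq> S'"
    and pos: "\<forall>v\<in>F. 0 < c v" and pos': "\<forall>v\<in>F'. 0 < c' v"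
    and sum1: "sum c F = 1" and sum1': "sum c' F' = 1"
    and comb: "(\<Sum>v\<in>F. c v *\<^sub>R v) = (\<Sum>v\<in>F'. c' v *\<^sub>R v)"
  shows "F = F' \<and> (\<forall>v\<in>F. c v = c' v)"
proof -
  have fin: "finite S" "finite S'"
    using indep indep' by (simp_all add: aff_independent_finite)
  obtain K where KS: "K \<subseteq> S" and K: "convex hull S \<inter> convex hull S' = convex hull K"
    using face unfolding face_of_convex_hull_affine_independent[OF indep] by blast
  obtain K' where K'S': "K' \<subseteq> S'" and K': "convex hull S \<inter> convex hull S' = convex hull K'"
    using face' unfolding face_of_convex_hull_affine_independent[OF indep'] by blast
  \<comment> \<open>The common face has a unique vertex set, so it is spanned by common vertices.\<close>
  have "K = {x. x extreme_point_of convex hull K}" "K' = {x. x extreme_point_of convex hull K'}"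
    using extreme_point_of_convex_hull_affine_independent affine_independent_subset
      indep indep' KS K'S' by blast+
  then have "K = K'"
    using K K' by simp
  have in_hull: "(\<Sum>v\<in>A. b v *\<^sub>R v) \<in> convex hull B"
    if "A \<subseteq> B" "finite B" "\<forall>v\<in>A. 0 < b v" "sum b A = 1" for A B and b :: "'a \<Rightarrow> real"
    using that by (intro convex_sum) (auto intro: hull_inc finite_subset less_imp_le)
  have "(\<Sum>v\<in>F'. c' v *\<^sub>R v) \<in> convex hull K"
    unfolding K[symmetric]
    using in_hull[OF FS fin(1) pos sum1] in_hull[OF F'S' fin(2) pos' sum1'] comb by simp
  then obtain k where k: "\<forall>v\<in>K. 0 \<le> k v" "sum k K = 1" "(\<Sum>v\<in>K. k v *\<^sub>R v) = (\<Sum>v\<in>F'. c' v *\<^sub>R v)"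
    using finite_subset[OF KS fin(1)] unfolding convex_hull_finite[OF finite_subset[OF KS fin(1)]]
    by blast
  have KS': "K \<subseteq> S'"
    using K'S' \<open>K = K'\<close> by simp
  have "F' \<subseteq> K"
  proof
    fix v assume v: "v \<in> F'"
    have "(if v \<in> F' then c' v else 0) = (if v \<in> K then k v else 0)"
      by (rule affine_independent_coefficients_eq[OF indep' fin(2) F'S' KS'])
        (use k sum1' v F'S' in auto)
    then show "v \<in> K"
      using pos' v by (auto split: if_splits)
  qed
  then show ?thesis
    using positive_affine_combination_unique[OF indep fin(1) FS _ pos pos'] KS sum1 sum1' comb
    by auto
qed

lemma affine_independent_imp_independent:
  fixes S :: "'a::euclidean_space set" and L :: "'a \<Rightarrow> real"
  assumes "linear L" and L1: "\<forall>v\<in>S. L v = 1" and indep: "\<not> affine_dependent S"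
  shows "independent S"
proof
  assume "dependent S"
  moreover have fin: "finite S"
    using indep by (rule aff_independent_finite)
  ultimately obtain u where u: "\<exists>v\<in>S. u v \<noteq> 0" "(\<Sum>v\<in>S. u v *\<^sub>R v) = 0"
    unfolding dependent_finite[OF fin] by blast
  have "sum u S = L (\<Sum>v\<in>S. u v *\<^sub>R v)"
    using L1 by (simp add: linear_sum[OF \<open>linear L\<close>] linear_cmul[OF \<open>linear L\<close>])
  then have "sum u S = 0"
    using u(2) linear_0[OF \<open>linear L\<close>] by simp
  then show False
    using indep u unfolding affine_dependent_explicit_finite[OF fin] by blast
qed

section \<open>Compositions and generating functions\<close>

definition positive_compositions :: "'a set \<Rightarrow> nat \<Rightarrow> ('a \<Rightarrow> nat) set" where
  "positive_compositions F s = {l. (\<forall>f\<in>F. 0 < l f) \<and> (\<forall>f. f \<notin> F \<longrightarrow> l f = 0) \<and> sum l F = s}"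

lemma positive_compositions_empty:
  "positive_compositions {} s = (if s = 0 then {\<lambda>_. 0} else {})"
  by (auto simp: positive_compositions_def)

lemma positive_compositions_zero:
  assumes "l \<in> positive_compositions F 0" and "finite F"
  shows "F = {}"
  using assms by (auto simp: positive_compositions_def)

lemma positive_compositions_insert:
  assumes "finite F" "a \<notin> F"
  shows "positive_compositions (insert a F) s =
    (\<lambda>(m, l). l(a := m)) ` (SIGMA m:{1..s}. positive_compositions F (s - m))"
proof (intro equalityI subsetI)
  fix l assume l: "l \<in> positive_compositions (insert a F) s"
  have "sum (l(a := 0)) F = sum l F"
    using assms by (intro sum.cong) auto
  then have "(l a, l(a := 0)) \<in> (SIGMA m:{1..s}. positive_compositions F (s - m))"
    using l assms by (auto simp: positive_compositions_def)
  then show "l \<in> (\<lambda>(m, l). l(a := m)) ` (SIGMA m:{1..s}. positive_compositions F (s - m))"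
    by (force intro: image_eqI[where x = "(l a, l(a := 0))"])
next
  fix l assume "l \<in> (\<lambda>(m, l). l(a := m)) ` (SIGMA m:{1..s}. positive_compositions F (s - m))"
  then obtain m l' where "l = l'(a := m)" "1 \<le> m" "m \<le> s" "l' \<in> positive_compositions F (s - m)"
    by auto
  moreover have "sum l F = sum l' F"
    using assms \<open>l = l'(a := m)\<close> by (intro sum.cong) auto
  ultimately show "l \<in> positive_compositions (insert a F) s"
    using assms by (auto simp: positive_compositions_def)
qed

lemma positive_compositions_of_integer_weights:
  fixes w :: "'a \<Rightarrow> real"
  assumes "\<forall>v\<in>F. w v \<in> \<int>" and pos: "\<forall>v\<in>F. 0 < w v" and "sum w F = real s"
  obtains l where "l \<in> positive_compositions F s" and "\<forall>v\<in>F. real (l v) = w v"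
proof -
  have "\<forall>v\<in>F. w v \<in> \<nat>"
    using assms(1) pos by (simp add: Nats_altdef2 less_imp_le)
  then have "\<forall>v\<in>F. \<exists>m. w v = real m"
    by (blast elim: Nats_cases)
  then obtain n where n: "\<forall>v\<in>F. w v = real (n v)"
    by (metis bchoice)
  define l where "l v = (if v \<in> F then n v else 0)" for v
  have l_w: "\<forall>v\<in>F. real (l v) = w v"
    using n by (simp add: l_def)
  then have "real (sum l F) = sum w F"
    by simp
  then have "sum l F = s"
    using assms(3) by (simp only: of_nat_eq_iff)
  moreover have "\<forall>v\<in>F. 0 < l v"
    using l_w pos by (metis of_nat_0_less_iff)
  ultimately have "l \<in> positive_compositions F s"
    unfolding positive_compositions_def by (simp add: l_def)
  with l_w show thesis
    using that by blast
qed

lemma inverse_one_minus_fps_X: "inverse (1 - fps_X :: 'a::field fps) = Abs_fps (\<lambda>_. 1)"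
proof -
  have "inverse (inverse (Abs_fps (\<lambda>_. 1 :: 'a))) = Abs_fps (\<lambda>_. 1)"
    by (rule fps_inverse_idempotent) simp
  then show ?thesis
    by (simp only: fps_inverse_gp')
qed

lemma card_positive_compositions:
  assumes "finite F"
  shows "finite (positive_compositions F s) \<and>
    real (card (positive_compositions F s)) = fps_nth ((fps_X * inverse (1 - fps_X)) ^ card F) s"
  using assms
proof (induction F arbitrary: s rule: finite_induct)
  case empty
  then show ?case by (simp add: positive_compositions_empty)
next
  case (insert a F)
  let ?C = "(fps_X * inverse (1 - fps_X) :: real fps)"
  let ?\<Sigma> = "SIGMA m:{1..s}. positive_compositions F (s - m)"
  have "inj_on (\<lambda>(m, l). l(a := m)) ?\<Sigma>"
    using insert.hyps(2) by (auto simp: inj_on_def positive_compositions_def fun_eq_iff)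
  then have "card (positive_compositions (insert a F) s) = card ?\<Sigma>"
    by (simp add: positive_compositions_insert[OF insert.hyps] card_image)
  also have "real (card ?\<Sigma>) = (\<Sum>m=1..s. fps_nth (?C ^ card F) (s - m))"
    using insert.IH by (simp add: card_SigmaI)
  also have "\<dots> = (\<Sum>i=0..s. fps_nth ?C i * fps_nth (?C ^ card F) (s - i))"
    by (simp add: inverse_one_minus_fps_X sum.atLeast_Suc_atMost)
  also have "\<dots> = fps_nth (?C ^ card (insert a F)) s"
    using insert.hyps by (simp add: fps_mult_nth)
  finally show ?case
    using insert.IH positive_compositions_insert[OF insert.hyps] by simp
qed

lemma fps_binomial_shift:
  assumes "k \<le> d"
  shows "Abs_fps (\<lambda>s. real ((s + d - k) choose d)) = fps_X ^ k * inverse ((1 - fps_X) ^ Suc d)"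
proof -
  have "inverse ((1 - fps_X) ^ Suc d) = Abs_fps (\<lambda>s. real ((s + d) choose d))"
  proof (rule fps_ext)
    fix s
    have "(d + s) choose s = (s + d) choose d"
      using binomial_symmetric[of s "d + s"] by (simp add: add.commute)
    then show "fps_nth (inverse ((1 - fps_X) ^ Suc d)) s =
        fps_nth (Abs_fps (\<lambda>s. real ((s + d) choose d))) s"
      using one_minus_const_fps_X_neg_power'[of "Suc d" "1::real"] by simp
  qed
  then show ?thesis
    using assms by (intro fps_ext) (simp add: fps_X_power_mult_nth binomial_eq_0)
qed

lemma polynomial_identity_of_fps_identity:
  fixes a f :: "nat \<Rightarrow> real"
  assumes "(\<Sum>k\<le>d. fps_const (a k) * fps_X ^ k) =
    (\<Sum>j\<le>n. fps_const (f j) * fps_X ^ j * (1 - fps_X) ^ (n - j))"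
  shows "(\<Sum>k\<le>d. a k * x ^ k) = (\<Sum>j\<le>n. f j * x ^ j * (1 - x) ^ (n - j))"
proof -
  define p where "p = (\<Sum>k\<le>d. monom (a k) k)"
  define q where "q = (\<Sum>j\<le>n. smult (f j) (monom 1 j * (1 - monom 1 1) ^ (n - j)))"
  have "fps_of_poly p = fps_of_poly q"
    unfolding p_def q_def fps_of_poly_sum fps_of_poly_smult fps_of_poly_mult fps_of_poly_power
      fps_of_poly_diff fps_of_poly_1 fps_of_poly_monom fps_of_poly_monom'
    using assms by (simp only: power_one_right mult.assoc fps_const_1_eq_1 mult_1_left)
  then have "poly p x = poly q x"
    by (simp only: fps_of_poly_eq_iff)
  then show ?thesis
    by (simp add: p_def q_def poly_sum poly_monom mult.assoc)
qed

lemma fps_binomial_combination: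
  "(\<Sum>k\<le>d. fps_const (a k) * fps_X ^ k) * inverse ((1 - fps_X) ^ Suc d) =
    Abs_fps (\<lambda>s. \<Sum>k\<le>d. a k * real ((s + d - k) choose d))"
proof (rule fps_ext)
  fix s
  have "fps_nth (fps_X ^ k * inverse ((1 - fps_X) ^ Suc d)) s = real ((s + d - k) choose d)"
    if "k \<le> d" for k
    unfolding fps_binomial_shift[OF that, symmetric] by simp
  then show "fps_nth ((\<Sum>k\<le>d. fps_const (a k) * fps_X ^ k) * inverse ((1 - fps_X) ^ Suc d)) s =
      fps_nth (Abs_fps (\<lambda>s. \<Sum>k\<le>d. a k * real ((s + d - k) choose d))) s"
    by (simp add: sum_distrib_right fps_sum_nth mult.assoc)
qed

lemma h_star_polynomial_eq:
  fixes a f :: "nat \<Rightarrow> real"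
  assumes "\<forall>s. (\<Sum>k\<le>d. a k * real ((s + d - k) choose d)) =
    (\<Sum>j\<le>Suc d. f j * fps_nth ((fps_X * inverse (1 - fps_X)) ^ j) s)"
  shows "(\<Sum>k\<le>d. a k * x ^ k) = (\<Sum>j\<le>Suc d. f j * x ^ j * (1 - x) ^ (Suc d - j))"
proof (rule polynomial_identity_of_fps_identity)
  let ?N = "(1 - fps_X :: real fps) ^ Suc d"
  have unit: "inverse (1 - fps_X) * (1 - fps_X :: real fps) = 1" "inverse ?N * ?N = 1"
    by (simp_all add: inverse_mult_eq_1)
  have series: "(\<Sum>k\<le>d. fps_const (a k) * fps_X ^ k) * inverse ?N =
      (\<Sum>j\<le>Suc d. fps_const (f j) * (fps_X * inverse (1 - fps_X)) ^ j)"
    unfolding fps_binomial_combination using assms by (intro fps_ext) (simp add: fps_sum_nth)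
  have "(\<Sum>k\<le>d. fps_const (a k) * fps_X ^ k) =
      (\<Sum>k\<le>d. fps_const (a k) * fps_X ^ k) * (inverse ?N * ?N)"
    by (simp only: unit(2) mult_1_right)
  also have "\<dots> = (\<Sum>j\<le>Suc d. fps_const (f j) * (fps_X * inverse (1 - fps_X)) ^ j) * ?N"
    by (simp only: series flip: mult.assoc)
  also have "\<dots> = (\<Sum>j\<le>Suc d. fps_const (f j) * fps_X ^ j * (1 - fps_X) ^ (Suc d - j))"
    unfolding sum_distrib_right
  proof (intro sum.cong refl)
    fix j assume "j \<in> {..Suc d}"
    then have split: "?N = (1 - fps_X) ^ j * (1 - fps_X) ^ (Suc d - j)"
      by (simp flip: power_add)
    have "(fps_X * inverse (1 - fps_X)) ^ j * ?N =
        fps_X ^ j * (inverse (1 - fps_X) * (1 - fps_X)) ^ j * (1 - fps_X) ^ (Suc d - j)"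
      unfolding split by (simp only: power_mult_distrib mult_ac)
    then show "fps_const (f j) * (fps_X * inverse (1 - fps_X)) ^ j * ?N =
        fps_const (f j) * fps_X ^ j * (1 - fps_X) ^ (Suc d - j)"
      by (simp add: unit(1) mult.assoc)
  qed
  finally show "(\<Sum>k\<le>d. fps_const (a k) * fps_X ^ k) =
      (\<Sum>j\<le>Suc d. fps_const (f j) * fps_X ^ j * (1 - fps_X) ^ (Suc d - j))" .
qed

lemma h_poly_reciprocal:
  assumes "x \<noteq> 0"
  shows "x ^ Suc d * h_poly d T (1 / x) =
    (\<Sum>j\<le>Suc d. real (face_count T j) * x ^ j * (1 - x) ^ (Suc d - j))"
proof -
  have "x ^ Suc d * (1 / x - 1) ^ (Suc d - j) = x ^ j * (1 - x) ^ (Suc d - j)" if "j \<le> Suc d" for j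
  proof -
    have "x ^ Suc d * (1 / x - 1) ^ (Suc d - j) = x ^ j * (x * (1 / x - 1)) ^ (Suc d - j)"
      using that by (simp add: power_mult_distrib mult.assoc flip: power_add)
    also have "x * (1 / x - 1) = 1 - x"
      using assms by (simp add: field_simps)
    finally show ?thesis .
  qed
  then show ?thesis
    unfolding h_poly_def f_poly_def sum_distrib_left Suc_eq_plus1[symmetric]
    by (intro sum.cong refl) (simp add: mult.left_commute mult.assoc)
qed


section \<open>Lattice points of unimodular triangulations\<close>

definition lattice_point :: "real ^ 'n::finite \<Rightarrow> bool" where
  "lattice_point x \<longleftrightarrow> (\<forall>i. x $ i \<in> \<int>)"

definition unimodular :: "(real ^ 'n::finite) set \<Rightarrow> bool" where
  "unimodular F \<longleftrightarrow> (\<forall>c. lattice_point (\<Sum>f\<in>F. c f *\<^sub>R f) \<longrightarrow> (\<forall>f\<in>F. c f \<in> \<int>))"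

lemma lattice_point_integer_combination:
  assumes "\<forall>f\<in>F. lattice_point f" and "\<forall>f\<in>F. c f \<in> \<int>"
  shows "lattice_point (\<Sum>f\<in>F. c f *\<^sub>R f)"
  using assms by (auto simp: lattice_point_def intro!: Ints_sum Ints_mult)

lemma unimodular_subset:
  assumes "unimodular S" "finite S" "F \<subseteq> S"
  shows "unimodular F"
  unfolding unimodular_def
proof (intro allI impI ballI)
  fix c f assume lattice: "lattice_point (\<Sum>f\<in>F. c f *\<^sub>R f)" and "f \<in> F"
  define c' where "c' g = (if g \<in> F then c g else 0)" for g
  have "(\<Sum>g\<in>S. c' g *\<^sub>R g) = (\<Sum>g\<in>F. c g *\<^sub>R g)"
    using assms(2,3) by (simp add: c'_def if_distrib[of "\<lambda>t. t *\<^sub>R _"] sum.If_cases Int_absorb1)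
  then have "\<forall>g\<in>S. c' g \<in> \<int>"
    using assms(1) lattice unfolding unimodular_def by metis
  then have "c' f \<in> \<int>"
    using assms(3) \<open>f \<in> F\<close> by blast
  then show "c f \<in> \<int>"
    using \<open>f \<in> F\<close> by (simp add: c'_def)
qed

text \<open>For edge vectors, u is a vertex of degree one in the forest F and f0 its edge.\<close>

definition has_leaf :: "(real ^ 'n::finite) set \<Rightarrow> bool" where
  "has_leaf F \<longleftrightarrow> (\<exists>f0\<in>F. \<exists>u. f0 $ u = 1 \<and> (\<forall>f\<in>F. f \<noteq> f0 \<longrightarrow> f $ u = 0))"

lemma unimodular_by_leaves:
  assumes "finite F" and "\<forall>f\<in>F. lattice_point f"
    and leaf: "\<And>F'. F' \<subseteq> F \<Longrightarrow> F' \<noteq> {} \<Longrightarrow> has_leaf F'"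
  shows "unimodular F"
  using assms
proof (induction F rule: finite_psubset_induct)
  case (psubset F)
  show ?case
    unfolding unimodular_def
  proof (intro allI impI)
    fix c assume lattice: "lattice_point (\<Sum>f\<in>F. c f *\<^sub>R f)"
    show "\<forall>f\<in>F. c f \<in> \<int>"
    proof (cases "F = {}")
      case False
      \<comment> \<open>The coordinate u of a leaf f0 reads off c f0; then peel f0 off.\<close>
      obtain f0 u where f0: "f0 \<in> F" "f0 $ u = 1"
        and others: "\<forall>f\<in>F. f \<noteq> f0 \<longrightarrow> f $ u = 0"
        using psubset.prems(2)[OF subset_refl False] unfolding has_leaf_def by blast
      have split: "(\<Sum>f\<in>F. c f *\<^sub>R f) = c f0 *\<^sub>R f0 + (\<Sum>f\<in>F - {f0}. c f *\<^sub>R f)"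
        using psubset.hyps f0(1) by (simp add: sum.remove)
      have "(\<Sum>f\<in>F - {f0}. c f *\<^sub>R f) $ u = 0"
        using others by (simp add: sum_component)
      then have "(\<Sum>f\<in>F. c f *\<^sub>R f) $ u = c f0"
        unfolding split using f0(2) by simp
      moreover have "(\<Sum>f\<in>F. c f *\<^sub>R f) $ u \<in> \<int>"
        using lattice unfolding lattice_point_def by blast
      ultimately have "c f0 \<in> \<int>"
        by simp
      moreover have "lattice_point (\<Sum>f\<in>F - {f0}. c f *\<^sub>R f)"
      proof -
        have "(\<Sum>f\<in>F - {f0}. c f *\<^sub>R f) = (\<Sum>f\<in>F. c f *\<^sub>R f) - c f0 *\<^sub>R f0"
          unfolding split by simp
        then show ?thesis
          using lattice \<open>c f0 \<in> \<int>\<close> psubset.prems(1) f0(1)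
          by (simp add: lattice_point_def Ints_diff Ints_mult)
      qed
      moreover have "unimodular (F - {f0})"
        using f0(1) psubset.prems by (intro psubset.IH) auto
      ultimately show ?thesis
        unfolding unimodular_def by blast
    qed simp
  qed
qed

definition faces :: "'a set set \<Rightarrow> 'a set set" where
  "faces T = {F. \<exists>S\<in>T. F \<subseteq> S}"

definition nat_combination :: "'a set \<Rightarrow> ('a \<Rightarrow> nat) \<Rightarrow> 'a::real_vector" where
  "nat_combination F l = (\<Sum>f\<in>F. real (l f) *\<^sub>R f)"

lemma face_count_eq: "face_count T j = card {F \<in> faces T. card F = j}"
  unfolding face_count_def faces_def by (rule arg_cong[where f = card]) auto

locale unimodular_triangulation =
  fixes d :: nat and P :: "(real ^ 'n::finite) set" and T :: "(real ^ 'n) set set"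
  assumes triangulation: "is_triangulation d P T"
    and finite_triangulation: "finite T"
    and lattice_vertices: "\<And>S v. S \<in> T \<Longrightarrow> v \<in> S \<Longrightarrow> lattice_point v"
    and unimodular_simplices: "\<And>S. S \<in> T \<Longrightarrow> unimodular S"
begin

abbreviation lattice_points :: "nat \<Rightarrow> (real ^ 'n) set" where
  "lattice_points s \<equiv> {x \<in> (\<lambda>p. real s *\<^sub>R p) ` P. lattice_point x}"

lemma simplex_independent: "S \<in> T \<Longrightarrow> \<not> affine_dependent S"
  using triangulation unfolding is_triangulation_def by blast

lemma simplex_finite: "S \<in> T \<Longrightarrow> finite S"
  using simplex_independent by (rule aff_independent_finite)

lemma simplex_card: "S \<in> T \<Longrightarrow> card S = Suc d"
  using triangulation unfolding is_triangulation_def by simp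

lemma simplex_nonempty: "S \<in> T \<Longrightarrow> S \<noteq> {}"
  by (drule simplex_card) auto

lemma simplices_cover: "P = (\<Union>S\<in>T. convex hull S)"
  using triangulation unfolding is_triangulation_def by blast

lemma convex_hull_simplex_subset: "S \<in> T \<Longrightarrow> convex hull S \<subseteq> P"
  using simplices_cover by blast

lemma simplices_meet_in_face:
  assumes "S \<in> T" "S' \<in> T"
  shows "(convex hull S \<inter> convex hull S') face_of convex hull S"
    "(convex hull S \<inter> convex hull S') face_of convex hull S'"
  using assms triangulation unfolding is_triangulation_def by blast+

lemma face_finite: "F \<in> faces T \<Longrightarrow> finite F"
  unfolding faces_def using simplex_finite finite_subset by blast

lemma finite_faces: "finite (faces T)"
proof (rule finite_subset)
  show "faces T \<subseteq> Pow (\<Union>T)"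
    unfolding faces_def by blast
  show "finite (Pow (\<Union>T))"
    using finite_triangulation simplex_finite by simp
qed

lemma card_face_le:
  assumes "F \<in> faces T"
  shows "card F \<le> Suc d"
proof -
  obtain S where "S \<in> T" "F \<subseteq> S"
    using assms unfolding faces_def by blast
  then show ?thesis
    using card_mono[OF simplex_finite] simplex_card by metis
qed

lemma nat_combination_in_lattice_points:
  assumes "F \<in> faces T" and l: "l \<in> positive_compositions F s"
  shows "nat_combination F l \<in> lattice_points s"
proof -
  obtain S where S: "S \<in> T" "F \<subseteq> S"
    using assms unfolding faces_def by blast
  have "finite F"
    using face_finite assms(1) .
  have "lattice_point (nat_combination F l)"
    unfolding nat_combination_def
    using S lattice_vertices by (intro lattice_point_integer_combination) auto
  moreover have "nat_combination F l \<in> (\<lambda>p. real s *\<^sub>R p) ` P"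
  proof (cases "s = 0")
    case True
    then have "nat_combination F l = 0"
      using positive_compositions_zero[OF l[unfolded True] \<open>finite F\<close>]
      by (simp add: nat_combination_def)
    moreover obtain v where "v \<in> S"
      using simplex_nonempty[OF S(1)] by blast
    then have "v \<in> P"
      using convex_hull_simplex_subset[OF S(1)] by (meson hull_inc subsetD)
    ultimately show ?thesis
      using True by (intro image_eqI[of _ _ v]) simp_all
  next
    case False
    define y where "y = (\<Sum>f\<in>F. (real (l f) / real s) *\<^sub>R f)"
    have "sum l F = s"
      using l by (simp add: positive_compositions_def)
    then have "(\<Sum>f\<in>F. real (l f) / real s) = 1"
      using False by (simp flip: sum_divide_distrib of_nat_sum)
    then have "y \<in> convex hull S"
      unfolding y_def using \<open>finite F\<close> S(2)
      by (intro convex_sum convex_convex_hull) (auto intro: hull_inc)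
    then have "y \<in> P"
      using convex_hull_simplex_subset[OF S(1)] by blast
    moreover have "nat_combination F l = real s *\<^sub>R y"
      unfolding y_def nat_combination_def using False by (simp add: scaleR_sum_right)
    ultimately show ?thesis
      by blast
  qed
  ultimately show ?thesis
    by blast
qed

lemma nat_combination_inj:
  "inj_on (case_prod nat_combination) (SIGMA F:faces T. positive_compositions F s)"
proof (rule inj_onI, clarsimp)
  fix F l F' l'
  assume F: "F \<in> faces T" and l: "l \<in> positive_compositions F s"
    and F': "F' \<in> faces T" and l': "l' \<in> positive_compositions F' s"
    and eq: "nat_combination F l = nat_combination F' l'"
  show "F = F' \<and> l = l'"
  proof (cases "s = 0")
    case True
    then have "F = {}" "F' = {}"
      using positive_compositions_zero face_finite F F' l l' by blast+
    then show ?thesis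
      using l l' True by (simp add: positive_compositions_empty)
  next
    case False
    obtain S S' where S: "S \<in> T" "F \<subseteq> S" and S': "S' \<in> T" "F' \<subseteq> S'"
      using F F' unfolding faces_def by blast
    define c where "c f = real (l f) / real s" for f
    define c' where "c' f = real (l' f) / real s" for f
    have "sum l F = s" "sum l' F' = s" "\<forall>f\<in>F. 0 < l f" "\<forall>f\<in>F'. 0 < l' f"
      "\<forall>f. f \<notin> F \<longrightarrow> l f = 0" "\<forall>f. f \<notin> F' \<longrightarrow> l' f = 0"
      using l l' by (simp_all add: positive_compositions_def)
    then have "sum c F = 1" "sum c' F' = 1" "\<forall>f\<in>F. 0 < c f" "\<forall>f\<in>F'. 0 < c' f"
      using False by (simp_all add: c_def c'_def flip: sum_divide_distrib of_nat_sum)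
    moreover have "(\<Sum>f\<in>A. (real (k f) / real s) *\<^sub>R f) = (1 / real s) *\<^sub>R nat_combination A k"
      for A :: "(real ^ 'n) set" and k :: "real ^ 'n \<Rightarrow> nat"
      by (simp add: nat_combination_def scaleR_sum_right)
    then have "(\<Sum>f\<in>F. c f *\<^sub>R f) = (\<Sum>f\<in>F'. c' f *\<^sub>R f)"
      unfolding c_def c'_def using eq by simp
    ultimately have "F = F' \<and> (\<forall>f\<in>F. c f = c' f)"
      using simplicial_positive_combination_unique[OF simplex_independent[OF S(1)]
          simplex_independent[OF S'(1)] simplices_meet_in_face[OF S(1) S'(1)] S(2) S'(2)]
      by blast
    then show ?thesis
      using False \<open>\<forall>f. f \<notin> F \<longrightarrow> l f = 0\<close> \<open>\<forall>f. f \<notin> F' \<longrightarrow> l' f = 0\<close>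
      by (auto simp: c_def c'_def fun_eq_iff)
  qed
qed

lemma lattice_points_subset_nat_combinations:
  assumes x: "x \<in> lattice_points s"
  shows "x \<in> case_prod nat_combination ` (SIGMA F:faces T. positive_compositions F s)"
proof -
  obtain y where y: "y \<in> P" and x_def: "x = real s *\<^sub>R y" and "lattice_point x"
    using x by blast
  obtain S where S: "S \<in> T" "y \<in> convex hull S"
    using y simplices_cover by blast
  obtain F c where F: "F \<subseteq> S" "\<forall>v\<in>F. 0 < c v" "sum c F = 1" "(\<Sum>v\<in>F. c v *\<^sub>R v) = y"
    using convex_hull_finite_positive[OF simplex_finite[OF S(1)] S(2)] by blast
  show ?thesis
  proof (cases "s = 0")
    case True
    have "{} \<in> faces T" "(\<lambda>_. 0) \<in> positive_compositions {} s"
      using S(1) True by (auto simp: faces_def positive_compositions_empty)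
    moreover have "x = nat_combination {} (\<lambda>_. 0)"
      using True by (simp add: x_def nat_combination_def)
    ultimately show ?thesis
      by blast
  next
    case False
    define w where "w v = real s * c v" for v
    have x_w: "x = (\<Sum>v\<in>F. w v *\<^sub>R v)"
      unfolding x_def F(4)[symmetric] by (simp add: w_def scaleR_sum_right)
    have "\<forall>v\<in>F. w v \<in> \<int>"
      using unimodular_subset[OF unimodular_simplices simplex_finite F(1)] S(1) \<open>lattice_point x\<close>
      unfolding unimodular_def x_w by blast
    moreover have "\<forall>v\<in>F. 0 < w v"
      using F(2) False by (simp add: w_def)
    moreover have "sum w F = real s"
      using F(3) by (simp add: w_def flip: sum_distrib_left)
    ultimately obtain l where "l \<in> positive_compositions F s" and l_w: "\<forall>v\<in>F. real (l v) = w v"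
      by (rule positive_compositions_of_integer_weights)
    moreover have "x = nat_combination F l"
      using l_w by (simp add: x_w nat_combination_def)
    moreover have "F \<in> faces T"
      using S(1) F(1) by (auto simp: faces_def)
    ultimately show ?thesis
      by blast
  qed
qed

theorem card_lattice_points:
  "real (card (lattice_points s)) =
    (\<Sum>j\<le>Suc d. real (face_count T j) * fps_nth ((fps_X * inverse (1 - fps_X)) ^ j) s)"
proof -
  let ?C = "fps_X * inverse (1 - fps_X) :: real fps"
  let ?\<Sigma> = "SIGMA F:faces T. positive_compositions F s"
  have "case_prod nat_combination ` ?\<Sigma> = lattice_points s"
  proof
    show "case_prod nat_combination ` ?\<Sigma> \<subseteq> lattice_points s"
    proof (rule image_subsetI)
      fix p assume "p \<in> ?\<Sigma>"
      then obtain F l where "p = (F, l)" "F \<in> faces T" "l \<in> positive_compositions F s"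
        by blast
      then show "case_prod nat_combination p \<in> lattice_points s"
        by (simp only: case_prod_conv) (rule nat_combination_in_lattice_points)
    qed
    show "lattice_points s \<subseteq> case_prod nat_combination ` ?\<Sigma>"
      using lattice_points_subset_nat_combinations by (rule subsetI)
  qed
  then have "bij_betw (case_prod nat_combination) ?\<Sigma> (lattice_points s)"
    using nat_combination_inj unfolding bij_betw_def by blast
  then have "card (lattice_points s) = card ?\<Sigma>"
    by (simp add: bij_betw_same_card)
  also have "\<dots> = (\<Sum>F\<in>faces T. card (positive_compositions F s))"
    using finite_faces card_positive_compositions face_finite by (intro card_SigmaI) blast+
  finally have "real (card (lattice_points s)) = (\<Sum>F\<in>faces T. real (card (positive_compositions F s)))"
    by simp
  also have "\<dots> = (\<Sum>F\<in>faces T. fps_nth (?C ^ card F) s)"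
    by (intro sum.cong refl) (simp add: card_positive_compositions face_finite)
  also have "\<dots> = (\<Sum>j\<le>Suc d. \<Sum>F\<in>{F \<in> faces T. card F = j}. fps_nth (?C ^ card F) s)"
    using finite_faces card_face_le by (intro sum.group[symmetric]) auto
  also have "\<dots> = (\<Sum>j\<le>Suc d. real (face_count T j) * fps_nth (?C ^ j) s)"
    by (simp add: face_count_eq)
  finally show ?thesis .
qed

end


section \<open>Edge vectors of a bipartite graph\<close>

definition edge_vectors :: "('e::finite \<Rightarrow> 'v::finite \<Rightarrow> bool) \<Rightarrow> (real ^ ('e + 'v)) set" where
  "edge_vectors G = {axis (Inl e) 1 + axis (Inr v) 1 | e v. G e v}"

lemma root_polytope_eq: "root_polytope G = convex hull edge_vectors G"
  by (simp add: root_polytope_def edge_vectors_def)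

lemma finite_edge_vectors: "finite (edge_vectors G)"
proof -
  have "edge_vectors G = (\<lambda>(e, v). axis (Inl e) 1 + axis (Inr v) 1) ` {(e, v). G e v}"
    by (auto simp: edge_vectors_def)
  then show ?thesis
    by simp
qed

lemma edge_vector_component:
  assumes "w \<in> edge_vectors G"
  shows "w $ u = 0 \<or> w $ u = 1"
  using assms by (auto simp: edge_vectors_def axis_def)

lemma edge_vector_lattice_point: "w \<in> edge_vectors G \<Longrightarrow> lattice_point w"
  using edge_vector_component unfolding lattice_point_def by (metis Ints_0 Ints_1)

lemma edge_vector_sums:
  assumes "w \<in> edge_vectors G"
  shows "(\<Sum>e\<in>UNIV. w $ Inl e) = 1" "(\<Sum>v\<in>UNIV. w $ Inr v) = 1" "(\<Sum>u\<in>UNIV. w $ u) = 2"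
  using assms by (auto simp: edge_vectors_def axis_def sum.distrib)

lemma edge_vector_in_span_axes:
  assumes "w \<in> edge_vectors G"
  shows "w \<in> span ((\<lambda>u. axis u 1) ` {u. w $ u \<noteq> 0})"
proof -
  obtain e v where w: "w = axis (Inl e) 1 + axis (Inr v) 1"
    using assms by (auto simp: edge_vectors_def)
  then have "w $ Inl e \<noteq> 0" "w $ Inr v \<noteq> 0"
    by (simp_all add: axis_def)
  then show ?thesis
    unfolding w by (intro span_add span_base) auto
qed

lemma independent_edge_vectors_card_less:
  assumes FG: "F \<subseteq> edge_vectors G" and "F \<noteq> {}" and indep: "independent F"
  shows "card F < card {u. \<exists>f\<in>F. f $ u \<noteq> 0}"
proof -
  define U where "U = {u. \<exists>f\<in>F. f $ u \<noteq> 0}"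
  obtain f0 where "f0 \<in> F"
    using \<open>F \<noteq> {}\<close> by blast
  then obtain e v where f0: "f0 = axis (Inl e) 1 + axis (Inr v) 1"
    using FG by (auto simp: edge_vectors_def)
  define b where "b = (axis (Inl e) 1 :: real ^ ('a + 'b))"
  \<comment> \<open>The two colour classes carry the same weight on every edge vector, but not on b.\<close>
  define L where "L x = (\<Sum>e\<in>UNIV. x $ Inl e) - (\<Sum>v\<in>UNIV. x $ Inr v)" for x :: "real ^ ('a + 'b)"
  have "linear L"
    by (rule linearI) (simp_all add: L_def sum.distrib sum_subtractf sum_distrib_left algebra_simps)
  moreover have "\<forall>f\<in>F. L f = 0"
    using FG edge_vector_sums(1,2)[of _ G] by (auto simp: L_def)
  ultimately have "\<forall>x\<in>span F. L x = 0"
    using linear_eq_0_on_span by blast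
  moreover have "L b = 1"
    by (simp add: L_def b_def axis_def)
  ultimately have "b \<notin> span F"
    by fastforce
  then have "independent (insert b F)" and "b \<notin> F"
    using indep span_base by (auto simp: independent_insert)
  moreover have "insert b F \<subseteq> span ((\<lambda>u. axis u 1) ` U)"
  proof -
    have "w \<in> span ((\<lambda>u. axis u 1) ` U)" if "w \<in> F" for w
    proof -
      have "(\<lambda>u. axis u 1) ` {u. w $ u \<noteq> 0} \<subseteq> (\<lambda>u. axis u (1::real)) ` U"
        using that unfolding U_def by blast
      then show ?thesis
        using edge_vector_in_span_axes[of w G] that FG span_mono by blast
    qed
    moreover have "f0 $ Inl e = 1"
      by (simp add: f0 axis_def)
    then have "Inl e \<in> U"
      unfolding U_def using \<open>f0 \<in> F\<close> by force
    ultimately show ?thesis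
      unfolding b_def by (auto intro: span_base)
  qed
  ultimately have "card (insert b F) \<le> card ((\<lambda>u. axis u (1::real)) ` U)"
    using independent_span_bound[of "(\<lambda>u. axis u 1) ` U" "insert b F"] by (simp del: card_insert_disjoint)
  also have "\<dots> \<le> card U"
    by (rule card_image_le) simp
  finally show ?thesis
    using finite_subset[OF FG finite_edge_vectors] \<open>b \<notin> F\<close> by (simp add: U_def)
qed

lemma independent_edge_vectors_leaf:
  assumes FG: "F \<subseteq> edge_vectors G" and "F \<noteq> {}" and "independent F"
  shows "has_leaf F"
proof (rule ccontr)
  assume no_leaf: "\<not> ?thesis"
  define U where "U = {u. \<exists>f\<in>F. f $ u \<noteq> 0}"
  have fin: "finite F"
    using FG finite_edge_vectors by (rule finite_subset)
  have component: "f $ u = 0 \<or> f $ u = 1" if "f \<in> F" for f u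
    using that FG edge_vector_component by blast
  have nonneg: "0 \<le> f $ u" if "f \<in> F" for f u
    using component[OF that, of u] by auto
  \<comment> \<open>Without a leaf every vertex met by F is met at least twice; count incidences.\<close>
  have "2 \<le> (\<Sum>f\<in>F. f $ u)" if "u \<in> U" for u
  proof -
    obtain f where f: "f \<in> F" "f $ u = 1"
      using \<open>u \<in> U\<close> component unfolding U_def by blast
    then obtain f' where f': "f' \<in> F" "f' \<noteq> f" "f' $ u = 1"
      using no_leaf component unfolding has_leaf_def by blast
    have "(\<Sum>g\<in>{f, f'}. g $ u) \<le> (\<Sum>g\<in>F. g $ u)"
      using f f' fin nonneg by (intro sum_mono2) auto
    then show ?thesis
      using f f' by simp
  qed
  then have "(\<Sum>u\<in>U. 2) \<le> (\<Sum>u\<in>U. \<Sum>f\<in>F. f $ u)"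
    by (rule sum_mono)
  then have "2 * real (card U) \<le> (\<Sum>u\<in>U. \<Sum>f\<in>F. f $ u)"
    by (simp add: mult.commute)
  also have "\<dots> \<le> (\<Sum>u\<in>UNIV. \<Sum>f\<in>F. f $ u)"
    using nonneg by (intro sum_mono2 sum_nonneg) auto
  also have "\<dots> = (\<Sum>f\<in>F. \<Sum>u\<in>UNIV. f $ u)"
    by (rule sum.swap)
  also have "\<dots> = 2 * real (card F)"
    using FG edge_vector_sums(3)[of _ G] by (simp add: subset_iff)
  finally have "card U \<le> card F"
    by simp
  then show False
    using independent_edge_vectors_card_less[OF assms] unfolding U_def by simp
qed

lemma unimodular_independent_edge_vectors:
  assumes "F \<subseteq> edge_vectors G" and "independent F"
  shows "unimodular F"
proof (rule unimodular_by_leaves)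
  show "finite F"
    using assms(1) finite_edge_vectors by (rule finite_subset)
  show "\<forall>f\<in>F. lattice_point f"
    using assms(1) edge_vector_lattice_point by blast
  show "has_leaf F'"
    if "F' \<subseteq> F" "F' \<noteq> {}" for F'
    using that assms independent_mono[OF assms(2) that(1)]
    by (intro independent_edge_vectors_leaf) auto
qed

lemma unimodular_triangulation_root_polytope:
  assumes tri: "is_triangulation d (root_polytope G) T"
  shows "unimodular_triangulation d (root_polytope G) T"
proof
  have vertices: "S \<subseteq> edge_vectors G" if "S \<in> T" for S
    using tri that extreme_point_of_convex_hull unfolding is_triangulation_def root_polytope_eq
    by blast
  show "is_triangulation d (root_polytope G) T"
    by (rule tri)
  show "finite T"
    using vertices finite_edge_vectors by (meson Pow_iff finite_Pow_iff finite_subset subsetI)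
  show "lattice_point v" if "S \<in> T" "v \<in> S" for S v
    using that vertices edge_vector_lattice_point by blast
  \<comment> \<open>Edge vectors lie on the affine hyperplane where the E-coordinates sum to 1.\<close>
  have "linear (\<lambda>x :: real ^ ('a + 'b). \<Sum>e\<in>UNIV. x $ Inl e)"
    by (rule linearI) (simp_all add: sum.distrib sum_distrib_left)
  then show "unimodular S" if "S \<in> T" for S
    using that vertices tri edge_vector_sums(1)[of _ G] unfolding is_triangulation_def
    by (intro unimodular_independent_edge_vectors affine_independent_imp_independent) blast+
qed

theorem theorem3p9:
  fixes G :: "'e::finite \<Rightarrow> 'v::finite \<Rightarrow> bool"
    and a :: "nat \<Rightarrow> rat"
    and T :: "(real ^ ('e + 'v)) set set"
  assumes conn: "bip_connected G"
    and d_def: "d = CARD('e) + CARD('v) - 2"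
    and ehr: "\<forall>s::nat. real (ehrhart G s) = (\<Sum>k\<le>d. real_of_rat (a k) * real ((s + d - k) choose d))"
    and tri: "is_triangulation d (root_polytope G) T"
  shows "\<forall>x::real. x \<noteq> 0 \<longrightarrow>
           x ^ (CARD('e) + CARD('v) - 1) * h_poly d T (1 / x) = (\<Sum>k\<le>d. real_of_rat (a k) * x ^ k)"
proof (intro allI impI)
  fix x :: real assume "x \<noteq> 0"
  interpret unimodular_triangulation d "root_polytope G" T
    using tri by (rule unimodular_triangulation_root_polytope)
  have "0 < CARD('e)" "0 < CARD('v)"
    by simp_all
  then have "CARD('e) + CARD('v) - 1 = Suc d"
    using d_def by linarith
  moreover have "\<forall>s. (\<Sum>k\<le>d. real_of_rat (a k) * real ((s + d - k) choose d)) =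
      (\<Sum>j\<le>Suc d. real (face_count T j) * fps_nth ((fps_X * inverse (1 - fps_X)) ^ j) s)"
    using ehr card_lattice_points unfolding ehrhart_def lattice_point_def by simp
  then have "(\<Sum>k\<le>d. real_of_rat (a k) * x ^ k) =
      (\<Sum>j\<le>Suc d. real (face_count T j) * x ^ j * (1 - x) ^ (Suc d - j))"
    by (rule h_star_polynomial_eq)
  ultimately show "x ^ (CARD('e) + CARD('v) - 1) * h_poly d T (1 / x) =
      (\<Sum>k\<le>d. real_of_rat (a k) * x ^ k)"
    using h_poly_reciprocal[OF \<open>x \<noteq> 0\<close>] by simp
qed

end
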